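(* In any falsifiable Outcome Logic instance, for every outcome assertion $\varphi$ containing no implications and all $m_1,m_2\in M\Sigma$ with $m_1\diamond m_2$ defined: if $m_1\diamond m_2\vDash\varphi$, then there exist outcome assertions $\varphi_1,\varphi_2$ with $m_1\vDash\varphi_1$, $m_2\vDash\varphi_2$, and $\varphi_1\oplus\varphi_2\Rightarrow\varphi$.
   Context: OL instance: execution model $\langle M,\mathsf{bind},\mathsf{unit},\diamond,\varnothing\rangle$ (monad on sets, with each $(MA,\diamond,\varnothing)$ a partial commutative monoid preserved by $\mathsf{bind}$), program states $\Sigma$, atomic commands $[\![c]\!]\colon\Sigma\to M\Sigma$, atomic assertions with relation $\vDash_{\mathsf{atom}}\subseteq M\Sigma\times\mathsf{Prop}$. Programs $C::=\mathbb{0}\mid\mathbb{1}\mid C_1;C_2\mid C_1+C_2\mid C^\star\mid c$ with the standard monadic semantics ($\mathbb{0}\mapsto\varnothing$, $\mathbb{1}\mapsto\mathsf{unit}$, sequencing by $\mathsf{bind}$, $+$ by $\diamond$, $C^\star$ as least fixed point of $f\mapsto\lambda\sigma.f^\dagger([\![C]\!](\sigma))\diamond\mathsf{unit}(\sigma)$), $[\![C]\!]^\dagger(m)=\mathsf{bind}(m,[\![C]\!])$. Outcome assertions: $\top,\bot,\top^\oplus$ (only $\varnothing$), classical $\land$ and $\Rightarrow$, atomic $P$, and $\oplus$ ($m\vDash\varphi\oplus\psi$ iff $m=m_1\diamond m_2$ with $m_1\vDash\varphi$, $m_2\vDash\psi$); $\lnot\varphi=\varphi\Rightarrow\bot$;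 "no implications" means $\Rightarrow$ (hence $\lnot$) does not occur. $\varphi\Rightarrow\psi$ as a proposition means every $m$ satisfying $\varphi$ satisfies $\psi$; $\vDash\langle\varphi\rangle C\langle\psi\rangle$ iff $m\vDash\varphi$ implies $[\![C]\!]^\dagger(m)\vDash\psi$. The instance is falsifiable if: (1a) $m_1\diamond m_2=\varnothing$ implies $m_1=m_2=\varnothing$; (1b) if $m_1\diamond m_2=n_1\diamond n_2$ then there exist $s_1,s_2,t_1,t_2$ with $s_1\diamond s_2=n_1$, $t_1\diamond t_2=n_2$, $s_1\diamond t_1=m_1$, $s_2\diamond t_2=m_2$; (2) for every atomic $P$, if $m_1\diamond m_2\vDash P$ then there are $\varphi_1,\varphi_2$ with $m_1\vDash\varphi_1$, $m_2\vDash\varphi_2$, $\varphi_1\oplus\varphi_2\Rightarrow P$; (3) for atomic $Q_1,\dots,Q_n$, $m\not\vDash Q_1\oplus\cdots\oplus Q_n$ iff there is an implication-free $\psi$ with $m\vDash\psi$ and $\psi\Rightarrow\lnot(Q_1\oplus\cdots\oplus Q_n)$; (4) for every atomic command $c$ and implication-free $\psi$, if $[\![c]\!]^\dagger(m)\vDash\psi$ then there is an implication-free $\varphi$ with $m\vDash\varphi$ and $\vDash\langle\varphi\rangle c\langle\psi\rangle$. *)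

theory Defs
  imports Main
begin

datatype 'p oassn =
    OTop | OBot | OTopPlus
  | OAnd "'p oassn" "'p oassn"
  | OImp "'p oassn" "'p oassn"
  | OAtom 'p
  | OPlus "'p oassn" "'p oassn"

definition ONot :: "'p oassn \<Rightarrow> 'p oassn" where
  "ONot \<phi> = OImp \<phi> OBot"

fun impl_free :: "'p oassn \<Rightarrow> bool" where
  "impl_free OTop = True"
| "impl_free OBot = True"
| "impl_free OTopPlus = True"
| "impl_free (OAnd a b) = (impl_free a \<and> impl_free b)"
| "impl_free (OImp a b) = False"
| "impl_free (OAtom p) = True"
| "impl_free (OPlus a b) = (impl_free a \<and> impl_free b)"

text \<open>Satisfaction. The partial operation diamond is modelled as comb :: 'm => 'm => 'm option,
  with None meaning undefined; zero is the empty outcome.\<close>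
fun osat :: "('m \<Rightarrow> 'm \<Rightarrow> 'm option) \<Rightarrow> 'm \<Rightarrow> ('m \<Rightarrow> 'p \<Rightarrow> bool)
              \<Rightarrow> 'm \<Rightarrow> 'p oassn \<Rightarrow> bool" where
  "osat comb zero sa m OTop = True"
| "osat comb zero sa m OBot = False"
| "osat comb zero sa m OTopPlus = (m = zero)"
| "osat comb zero sa m (OAnd a b) = (osat comb zero sa m a \<and> osat comb zero sa m b)"
| "osat comb zero sa m (OImp a b) = (osat comb zero sa m a \<longrightarrow> osat comb zero sa m b)"
| "osat comb zero sa m (OAtom p) = sa m p"
| "osat comb zero sa m (OPlus a b) =
     (\<exists>m1 m2. comb m1 m2 = Some m \<and> osat comb zero sa m1 a \<and> osat comb zero sa m2 b)"

definition oentails :: "('m \<Rightarrow> 'm \<Rightarrow> 'm option) \<Rightarrow> 'm \<Rightarrow> ('m \<Rightarrow> 'p \<Rightarrow> bool)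
              \<Rightarrow> 'p oassn \<Rightarrow> 'p oassn \<Rightarrow> bool" where
  "oentails comb zero sa \<phi> \<psi> = (\<forall>m. osat comb zero sa m \<phi> \<longrightarrow> osat comb zero sa m \<psi>)"

fun oplus_atoms :: "'p list \<Rightarrow> 'p oassn" where
  "oplus_atoms [] = OTopPlus"
| "oplus_atoms [q] = OAtom q"
| "oplus_atoms (q # qs) = OPlus (OAtom q) (oplus_atoms qs)"

text \<open>An OL instance, restricted to the carrier M Sigma (the only instance of the monad that
  the definitions below use): unit, bind, partial commutative monoid (comb, zero) preserved by
  bind, and semantics of atomic commands.\<close>
locale OL_instance =
  fixes unit :: "'s \<Rightarrow> 'm"
    and bind :: "'m \<Rightarrow> ('s \<Rightarrow> 'm) \<Rightarrow> 'm"
    and comb :: "'m \<Rightarrow> 'm \<Rightarrow> 'm option"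
    and zero :: "'m"
    and csem :: "'c \<Rightarrow> 's \<Rightarrow> 'm"
    and sa :: "'m \<Rightarrow> 'p \<Rightarrow> bool"
  assumes bind_unit_left: "bind (unit s) f = f s"
    and bind_unit_right: "bind m unit = m"
    and bind_assoc: "bind (bind m f) g = bind m (\<lambda>s. bind (f s) g)"
    and comb_comm: "comb a b = comb b a"
    and comb_assoc: "Option.bind (comb a b) (\<lambda>ab. comb ab c) = Option.bind (comb b c) (\<lambda>bc. comb a bc)"
    and comb_zero: "comb zero a = Some a"
    and bind_zero: "bind zero f = zero"
    and bind_comb: "comb a b = Some ab \<Longrightarrow> comb (bind a f) (bind b f) = Some (bind ab f)"

locale falsifiable_OL = OL_instance +
  assumes f1a: "comb m1 m2 = Some zero \<Longrightarrow> m1 = zero \<and> m2 = zero"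
    and f1b: "comb m1 m2 = Some k \<Longrightarrow> comb n1 n2 = Some k \<Longrightarrow>
        \<exists>s1 s2 t1 t2. comb s1 s2 = Some n1 \<and> comb t1 t2 = Some n2
                    \<and> comb s1 t1 = Some m1 \<and> comb s2 t2 = Some m2"
    and f2: "comb m1 m2 = Some k \<Longrightarrow> sa k P \<Longrightarrow>
        \<exists>\<phi>1 \<phi>2. osat comb zero sa m1 \<phi>1 \<and> osat comb zero sa m2 \<phi>2
               \<and> oentails comb zero sa (OPlus \<phi>1 \<phi>2) (OAtom P)"
    and f3: "Qs \<noteq> [] \<Longrightarrow>
        (\<not> osat comb zero sa m (oplus_atoms Qs)) \<longleftrightarrow>
        (\<exists>\<psi>. impl_free \<psi> \<and> osat comb zero sa m \<psi>
              \<and> oentails comb zero sa \<psi> (ONot (oplus_atoms Qs)))"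
    and f4: "impl_free \<psi> \<Longrightarrow> osat comb zero sa (bind m (csem c)) \<psi> \<Longrightarrow>
        \<exists>\<phi>. impl_free \<phi> \<and> osat comb zero sa m \<phi>
             \<and> (\<forall>m'. osat comb zero sa m' \<phi> \<longrightarrow> osat comb zero sa (bind m' (csem c)) \<psi>)"

end

theory Submission
  imports Defs
begin

text \<open>The split of \<open>\<top>\<^sup>\<oplus>\<close> is forced by
  positivity (1a), atoms are handled by (2), and conjunctions are split componentwise. For
  \<open>\<phi> \<oplus> \<psi>\<close>, a decomposition of \<open>m\<^sub>1 \<diamond> m\<^sub>2\<close> witnessing \<open>\<phi> \<oplus> \<psi>\<close> is refined by (1b) into a
  \<open>2 \<times> 2\<close> grid whose rows sum to \<open>m\<^sub>1, m\<^sub>2\<close> and whose columns sum to the two witnesses; the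
  induction hypotheses split the columns, and the interchange law of a partial commutative
  semigroup reassembles the pieces.\<close>

lemma oentails_trans:
  "oentails comb zero sa \<phi> \<psi> \<Longrightarrow> oentails comb zero sa \<psi> \<chi> \<Longrightarrow> oentails comb zero sa \<phi> \<chi>"
  unfolding oentails_def by blast

lemma oentails_OPlus_mono:
  "oentails comb zero sa \<phi>1 \<psi>1 \<Longrightarrow> oentails comb zero sa \<phi>2 \<psi>2 \<Longrightarrow>
   oentails comb zero sa (OPlus \<phi>1 \<phi>2) (OPlus \<psi>1 \<psi>2)"
  unfolding oentails_def by fastforce

lemma oentails_OPlus_OAnd:
  "oentails comb zero sa (OPlus (OAnd a b) (OAnd c d)) (OAnd (OPlus a c) (OPlus b d))"
  unfolding oentails_def by auto

lemma oentails_OAnd_mono: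
  "oentails comb zero sa \<phi>1 \<psi>1 \<Longrightarrow> oentails comb zero sa \<phi>2 \<psi>2 \<Longrightarrow>
   oentails comb zero sa (OAnd \<phi>1 \<phi>2) (OAnd \<psi>1 \<psi>2)"
  unfolding oentails_def by simp

locale partial_comm_semigroup =
  fixes comb :: "'m \<Rightarrow> 'm \<Rightarrow> 'm option"
  assumes comm: "comb a b = comb b a"
    and assoc: "Option.bind (comb a b) (\<lambda>ab. comb ab c) = Option.bind (comb b c) (\<lambda>bc. comb a bc)"
begin

lemma assoc_Some:
  "(\<exists>ab. comb a b = Some ab \<and> comb ab c = Some n) \<longleftrightarrow> (\<exists>bc. comb b c = Some bc \<and> comb a bc = Some n)"
  unfolding bind_eq_Some_conv[symmetric] using assoc[of a b c] by simp

lemma interchange: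
  assumes "comb x1 y1 = Some n1" "comb x2 y2 = Some n2" "comb n1 n2 = Some n"
  shows "\<exists>u v. comb x1 x2 = Some u \<and> comb y1 y2 = Some v \<and> comb u v = Some n"
proof -
  \<comment> \<open>\<open>x1 (y1 (x2 y2)) = x1 ((y1 x2) y2) = x1 ((x2 y1) y2) = x1 (x2 (y1 y2)) = (x1 x2) (y1 y2)\<close>\<close>
  obtain w where w: "comb y1 n2 = Some w" "comb x1 w = Some n"
    using assoc_Some[of x1 y1 n2 n] assms(1,3) by blast
  obtain p where p: "comb y1 x2 = Some p" "comb p y2 = Some w"
    using assoc_Some[of y1 x2 y2 w] assms(2) w(1) by blast
  obtain v where v: "comb y1 y2 = Some v" "comb x2 v = Some w"
    using assoc_Some[of x2 y1 y2 w] p comm[of x2 y1] by auto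
  show ?thesis
    using assoc_Some[of x1 x2 v n] v w(2) by blast
qed

lemma oentails_OPlus_interchange:
  "oentails comb zero sa (OPlus (OPlus a b) (OPlus c d)) (OPlus (OPlus a c) (OPlus b d))"
  unfolding oentails_def
proof (intro allI impI)
  fix n
  assume "osat comb zero sa n (OPlus (OPlus a b) (OPlus c d))"
  then obtain n1 n2 x1 y1 x2 y2 where
    split: "comb n1 n2 = Some n" "comb x1 y1 = Some n1" "comb x2 y2 = Some n2" and
    sat: "osat comb zero sa x1 a" "osat comb zero sa y1 b"
      "osat comb zero sa x2 c" "osat comb zero sa y2 d"
    by auto
  obtain u v where "comb x1 x2 = Some u" "comb y1 y2 = Some v" "comb u v = Some n"
    using interchange[OF split(2,3,1)] by blast
  with sat show "osat comb zero sa n (OPlus (OPlus a c) (OPlus b d))"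
    by auto
qed

end

sublocale OL_instance \<subseteq> partial_comm_semigroup comb
  by unfold_locales (fact comb_comm, fact comb_assoc)

context falsifiable_OL
begin

lemma osat_comb_split:
  assumes "impl_free \<phi>" "comb m1 m2 = Some m" "osat comb zero sa m \<phi>"
  shows "\<exists>\<phi>1 \<phi>2. osat comb zero sa m1 \<phi>1 \<and> osat comb zero sa m2 \<phi>2
                 \<and> oentails comb zero sa (OPlus \<phi>1 \<phi>2) \<phi>"
  using assms
proof (induction \<phi> arbitrary: m1 m2 m)
  case OTop
  show ?case
    by (intro exI[of _ OTop]) (simp add: oentails_def)
next
  case OTopPlus
  then have "m1 = zero" "m2 = zero"
    using f1a by auto
  then show ?case
    by (intro exI[of _ OTopPlus]) (auto simp: oentails_def comb_zero)
next
  case (OAnd a b)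
  obtain a1 a2 where a: "osat comb zero sa m1 a1" "osat comb zero sa m2 a2"
      "oentails comb zero sa (OPlus a1 a2) a"
    using OAnd.IH(1)[of m1 m2 m] OAnd.prems by auto
  obtain b1 b2 where b: "osat comb zero sa m1 b1" "osat comb zero sa m2 b2"
      "oentails comb zero sa (OPlus b1 b2) b"
    using OAnd.IH(2)[of m1 m2 m] OAnd.prems by auto
  have "oentails comb zero sa (OPlus (OAnd a1 b1) (OAnd a2 b2)) (OAnd a b)"
    using oentails_trans[OF oentails_OPlus_OAnd oentails_OAnd_mono[OF a(3) b(3)]] .
  then show ?case
    using a(1,2) b(1,2) by (intro exI[of _ "OAnd a1 b1"] exI[of _ "OAnd a2 b2"]) simp
next
  case (OAtom P)
  then show ?case
    using f2 by simp
next
  case (OPlus a b)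
  obtain k1 k2 where k: "comb k1 k2 = Some m" "osat comb zero sa k1 a" "osat comb zero sa k2 b"
    using OPlus.prems(3) by auto
  obtain s1 s2 t1 t2 where st: "comb s1 s2 = Some k1" "comb t1 t2 = Some k2"
      "comb s1 t1 = Some m1" "comb s2 t2 = Some m2"
    using f1b[OF OPlus.prems(2) k(1)] by blast
  obtain a1 a2 where a: "osat comb zero sa s1 a1" "osat comb zero sa s2 a2"
      "oentails comb zero sa (OPlus a1 a2) a"
    using OPlus.IH(1)[of s1 s2 k1] OPlus.prems(1) st(1) k(2) by auto
  obtain b1 b2 where b: "osat comb zero sa t1 b1" "osat comb zero sa t2 b2"
      "oentails comb zero sa (OPlus b1 b2) b"
    using OPlus.IH(2)[of t1 t2 k2] OPlus.prems(1) st(2) k(3) by auto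
  have "oentails comb zero sa (OPlus (OPlus a1 b1) (OPlus a2 b2)) (OPlus a b)"
    using oentails_trans[OF oentails_OPlus_interchange oentails_OPlus_mono[OF a(3) b(3)]] .
  moreover have "osat comb zero sa m1 (OPlus a1 b1)" "osat comb zero sa m2 (OPlus a2 b2)"
    using st(3,4) a(1,2) b(1,2) by auto
  ultimately show ?case
    by blast
qed simp_all

end

theorem lemmaD3:
  fixes unit :: "'s \<Rightarrow> 'm" and bind :: "'m \<Rightarrow> ('s \<Rightarrow> 'm) \<Rightarrow> 'm"
    and comb :: "'m \<Rightarrow> 'm \<Rightarrow> 'm option" and zero :: "'m"
    and csem :: "'c \<Rightarrow> 's \<Rightarrow> 'm" and sa :: "'m \<Rightarrow> 'p \<Rightarrow> bool"
    and \<phi> :: "'p oassn"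
  assumes "falsifiable_OL unit bind comb zero csem sa"
    and "impl_free \<phi>"
    and "comb m1 m2 = Some m"
    and "osat comb zero sa m \<phi>"
  shows "\<exists>\<phi>1 \<phi>2. osat comb zero sa m1 \<phi>1 \<and> osat comb zero sa m2 \<phi>2
               \<and> oentails comb zero sa (OPlus \<phi>1 \<phi>2) \<phi>"
  using falsifiable_OL.osat_comb_split[OF assms] .

end
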